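(* Let $f:\mathbb{N}\to\mathbb{R}$ with $f(1)=1$ be multiplicative (i.e. $f(mn)=f(m)f(n)$ for coprime $m,n$), and suppose $f(p^k)=0$ for every prime $p$ and every integer $k\geq 2$. Assume there exist $C>0$ and $\gamma\in\mathbb{R}$ such that $|f(n)|\leq Cn^\gamma$ for all $n\geq2$. Then $$|f^{-1}(n)| \leq C^{\Omega(n)} n^{\gamma}, \quad n\geq2.$$
   Context: $f^{-1}$ denotes the Dirichlet inverse of $f$: the arithmetic function with $\sum_{d\mid n} f(n/d) f^{-1}(d)=\varepsilon(n)$ for all $n$, where $\varepsilon(1)=1$ and $\varepsilon(n)=0$ for $n\ge2$. $\Omega(n)$ is the number of prime factors of $n$ counted with multiplicity. *)

theory Defs
  imports Complex_Main "HOL-Computational_Algebra.Primes"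
begin

text \<open>Arithmetic functions are modelled as functions on nat; only positive arguments matter.
  g is a Dirichlet inverse of f if  sum over d dvd n of f (n div d) * g d  equals
  epsilon n for every n \<ge> 1.\<close>
definition is_dirichlet_inverse :: "(nat \<Rightarrow> real) \<Rightarrow> (nat \<Rightarrow> real) \<Rightarrow> bool" where
  "is_dirichlet_inverse f g \<longleftrightarrow>
     (\<forall>n>0. (\<Sum>d\<in>{d. d dvd n}. f (n div d) * g d) = (if n = 1 then 1 else 0))"

definition bigOmega :: "nat \<Rightarrow> nat" where
  "bigOmega n = size (prime_factorization n)"

end

theory Submission
  imports Defs
begin

text \<open>The Dirichlet inverse of such an f is the completely multiplicative function with
  value -f p at each prime p. Indeed, in the divisor sum at n > 1 fix a prime p dividing n:
  the terms with p^2 dividing n / d vanish, and the others cancel in pairs d, d p.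
  The inverse is unique since f 1 \<noteq> 0, and the bound then holds prime factor by prime factor.\<close>

definition prime_factor_prod :: "(nat \<Rightarrow> real) \<Rightarrow> nat \<Rightarrow> real" where
  "prime_factor_prod h n = (\<Prod>p\<in>#prime_factorization n. h p)"

lemma prime_factor_prod_prime: "prime p \<Longrightarrow> prime_factor_prod h p = h p"
  by (simp add: prime_factor_prod_def prime_factorization_prime)

lemma prime_factor_prod_mult:
  "x > 0 \<Longrightarrow> y > 0 \<Longrightarrow> prime_factor_prod h (x * y) = prime_factor_prod h x * prime_factor_prod h y"
  by (simp add: prime_factor_prod_def prime_factorization_mult)

lemma bigOmega_prime_mult: "prime p \<Longrightarrow> x > 0 \<Longrightarrow> bigOmega (p * x) = Suc (bigOmega x)"
  by (simp add: bigOmega_def prime_factorization_mult prime_factorization_prime prime_gt_0_nat)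

lemma abs_prime_factor_prod_le:
  fixes h :: "nat \<Rightarrow> real" and C \<gamma> :: real
  assumes "C \<ge> 0" and "\<And>p. prime p \<Longrightarrow> \<bar>h p\<bar> \<le> C * real p powr \<gamma>" and "n > 0"
  shows "\<bar>prime_factor_prod h n\<bar> \<le> C ^ bigOmega n * real n powr \<gamma>"
  using \<open>n > 0\<close>
proof (induction n rule: prime_divisors_induct)
  case (factor p x)
  then have "x > 0" by simp
  have "\<bar>prime_factor_prod h (p * x)\<bar> = \<bar>h p\<bar> * \<bar>prime_factor_prod h x\<bar>"
    using factor.hyps \<open>x > 0\<close>
    by (simp add: prime_factor_prod_mult prime_factor_prod_prime prime_gt_0_nat abs_mult)
  also have "\<dots> \<le> (C * real p powr \<gamma>) * (C ^ bigOmega x * real x powr \<gamma>)"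
    using assms(1,2) factor by (intro mult_mono) auto
  also have "\<dots> = C ^ bigOmega (p * x) * real (p * x) powr \<gamma>"
    using factor.hyps \<open>x > 0\<close> by (simp add: bigOmega_prime_mult powr_mult)
  finally show ?case .
qed (simp_all add: prime_factor_prod_def bigOmega_def)

lemma dirichlet_inverse_unique:
  assumes "f 1 \<noteq> 0" "is_dirichlet_inverse f g" "is_dirichlet_inverse f g'" "n > 0"
  shows "g n = g' n"
  using \<open>n > 0\<close>
proof (induction n rule: less_induct)
  case (less n)
  let ?D = "{d. d dvd n} - {n}"
  have split: "(\<Sum>d\<in>{d. d dvd n}. f (n div d) * k d) = f 1 * k n + (\<Sum>d\<in>?D. f (n div d) * k d)"
    for k :: "nat \<Rightarrow> real"
    using less.prems by (subst sum.remove[of _ n]) auto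
  have "(\<Sum>d\<in>?D. f (n div d) * g d) = (\<Sum>d\<in>?D. f (n div d) * g' d)"
  proof (rule sum.cong)
    fix d assume "d \<in> ?D"
    then have "d < n" "d > 0"
      using less.prems by (auto intro: gr0I dest: dvd_imp_le)
    then show "f (n div d) * g d = f (n div d) * g' d" using less.IH by simp
  qed simp
  moreover have "(\<Sum>d\<in>{d. d dvd n}. f (n div d) * g d) = (\<Sum>d\<in>{d. d dvd n}. f (n div d) * g' d)"
    using assms(2,3) less.prems by (simp add: is_dirichlet_inverse_def)
  ultimately show ?case
    using assms(1) by (simp add: split)
qed

lemma multiplicative_eq_0_if_prime_square_dvd:
  fixes f :: "nat \<Rightarrow> real"
  assumes mult: "\<And>m n. m > 0 \<Longrightarrow> n > 0 \<Longrightarrow> coprime m n \<Longrightarrow> f (m * n) = f m * f n"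
    and vanish: "\<And>k. k \<ge> 2 \<Longrightarrow> f (p ^ k) = 0"
    and p: "prime p" and "x > 0" and "p\<^sup>2 dvd x"
  shows "f x = 0"
proof -
  define k where "k = multiplicity p x"
  obtain y where y: "x = p ^ k * y" "\<not> p dvd y"
    using multiplicity_decompose'[of x p] \<open>x > 0\<close> p unfolding k_def
    by (metis gr_implies_not0 not_prime_unit)
  have "k \<ge> 2"
    using \<open>p\<^sup>2 dvd x\<close> \<open>x > 0\<close> power_dvd_iff_le_multiplicity[where p=p and n=2 and x=x]
      prime_gt_1_nat[OF p] unfolding k_def by simp
  have "coprime (p ^ k) y"
    using p y(2) by (simp add: prime_imp_coprime coprime_power_left_iff)
  then have "f x = f (p ^ k) * f y"
    using y(1) \<open>x > 0\<close> p by (simp add: mult prime_gt_0_nat)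
  with vanish[OF \<open>k \<ge> 2\<close>] show ?thesis by simp
qed

lemma dvd_div_imp_mult_dvd:
  fixes n e p :: nat
  assumes "e dvd n" "p dvd n div e"
  shows "e * p dvd n" "n div (e * p) = n div e div p"
proof -
  obtain r where "n div e = p * r" using assms(2) by blast
  then have "n = e * p * r" using assms(1) by (metis dvd_mult_div_cancel mult.assoc)
  then show "e * p dvd n" "n div (e * p) = n div e div p"
    by (simp_all add: div_mult2_eq)
qed

lemma sum_divisors_eq_0_by_prime_pairing:
  fixes h :: "nat \<Rightarrow> 'a :: ab_group_add"
  assumes "n > 0" "prime p" "p dvd n"
    and zero: "\<And>d. d dvd n \<Longrightarrow> p\<^sup>2 dvd n div d \<Longrightarrow> h d = 0"
    and pair: "\<And>e. e dvd n \<Longrightarrow> p dvd n div e \<Longrightarrow> \<not> p\<^sup>2 dvd n div e \<Longrightarrow> h (e * p) = - h e"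
  shows "(\<Sum>d | d dvd n. h d) = 0"
proof -
  define T0 where "T0 = {d. d dvd n \<and> \<not> p dvd n div d}"
  define T1 where "T1 = {e. e dvd n \<and> p dvd n div e \<and> \<not> p\<^sup>2 dvd n div e}"
  have T0_image: "T0 = (\<lambda>e. e * p) ` T1"
  proof (intro equalityI subsetI)
    fix d assume "d \<in> (\<lambda>e. e * p) ` T1"
    then obtain e where "e \<in> T1" "d = e * p" by auto
    then show "d \<in> T0"
      using dvd_div_imp_mult_dvd[of e n p] \<open>prime p\<close>
      by (auto simp: T0_def T1_def power2_eq_square dvd_div_iff_mult prime_gt_0_nat)
  next
    fix d assume "d \<in> T0"
    then have "d dvd n" "\<not> p dvd n div d" by (auto simp: T0_def)
    have "p dvd d * (n div d)" using \<open>d dvd n\<close> \<open>p dvd n\<close> by simp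
    then obtain e where "d = e * p"
      using \<open>prime p\<close> \<open>\<not> p dvd n div d\<close> by (metis dvdE mult.commute prime_dvd_mult_iff)
    moreover have "e \<in> T1"
      using \<open>d dvd n\<close> \<open>\<not> p dvd n div d\<close> \<open>prime p\<close> \<open>n > 0\<close> unfolding \<open>d = e * p\<close> T1_def
      by (auto simp: power2_eq_square div_mult2_eq dvd_div_iff_mult mult.commute
          dest: dvd_mult_left intro: dvd_mult_right)
    ultimately show "d \<in> (\<lambda>e. e * p) ` T1" by blast
  qed
  have "(\<Sum>d | d dvd n. h d) = sum h (T0 \<union> T1)"
    using \<open>n > 0\<close> zero by (intro sum.mono_neutral_right) (auto simp: T0_def T1_def)
  also have "\<dots> = sum h T0 + sum h T1"
    using \<open>n > 0\<close> by (intro sum.union_disjoint) (auto simp: T0_def T1_def)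
  also have "sum h T0 = (\<Sum>e\<in>T1. h (e * p))"
    unfolding T0_image using \<open>prime p\<close> by (simp add: sum.reindex inj_on_def prime_gt_0_nat)
  also have "\<dots> = - sum h T1"
    using pair by (simp add: T1_def sum_negf)
  finally show ?thesis by simp
qed

lemma is_dirichlet_inverse_prime_factor_prod:
  fixes f :: "nat \<Rightarrow> real"
  assumes f1: "f 1 = 1"
    and mult: "\<And>m n. m > 0 \<Longrightarrow> n > 0 \<Longrightarrow> coprime m n \<Longrightarrow> f (m * n) = f m * f n"
    and sqfree: "\<And>p k. prime p \<Longrightarrow> k \<ge> 2 \<Longrightarrow> f (p ^ k) = 0"
  shows "is_dirichlet_inverse f (prime_factor_prod (\<lambda>p. - f p))"
  unfolding is_dirichlet_inverse_def
proof (intro allI impI)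
  fix n :: nat
  assume "n > 0"
  let ?G = "prime_factor_prod (\<lambda>p. - f p)"
  show "(\<Sum>d\<in>{d. d dvd n}. f (n div d) * ?G d) = (if n = 1 then 1 else 0)"
  proof (cases "n = 1")
    case True
    then show ?thesis using f1 by (simp add: prime_factor_prod_def)
  next
    case False
    then obtain p where p: "prime p" "p dvd n" using prime_factor_nat by blast
    have "(\<Sum>d | d dvd n. f (n div d) * ?G d) = 0"
    proof (rule sum_divisors_eq_0_by_prime_pairing[OF \<open>n > 0\<close> p])
      fix d assume "d dvd n" "p\<^sup>2 dvd n div d"
      moreover have "n div d > 0" using \<open>d dvd n\<close> \<open>n > 0\<close> by (auto elim: dvdE)
      ultimately show "f (n div d) * ?G d = 0"
        using multiplicative_eq_0_if_prime_square_dvd[OF mult sqfree[OF p(1)] p(1)] by simp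
    next
      fix e assume e: "e dvd n" "p dvd n div e" "\<not> p\<^sup>2 dvd n div e"
      define r where "r = n div e div p"
      have ne: "n div e = p * r" using e(2) by (simp add: r_def)
      have "e > 0" "r > 0" using e(1) \<open>n > 0\<close> ne by (auto intro!: gr0I)
      have "coprime p r"
        using e(3) ne p(1) by (simp add: prime_imp_coprime power2_eq_square)
      then have "f (n div e) = f p * f r"
        using ne p(1) \<open>r > 0\<close> by (simp add: mult prime_gt_0_nat)
      moreover have "?G (e * p) = ?G e * - f p"
        using \<open>e > 0\<close> p(1) by (simp add: prime_factor_prod_mult prime_factor_prod_prime prime_gt_0_nat)
      moreover have "n div (e * p) = r"
        using dvd_div_imp_mult_dvd(2)[OF e(1,2)] by (simp add: r_def)
      ultimately show "f (n div (e * p)) * ?G (e * p) = - (f (n div e) * ?G e)"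
        by (simp add: algebra_simps)
    qed
    then show ?thesis using False by simp
  qed
qed

theorem proposition3p5:
  fixes f g :: "nat \<Rightarrow> real" and C \<gamma> :: real
  assumes f1: "f 1 = 1"
    and mult: "\<And>m n. m > 0 \<Longrightarrow> n > 0 \<Longrightarrow> coprime m n \<Longrightarrow> f (m * n) = f m * f n"
    and sqfree: "\<And>p k. prime p \<Longrightarrow> k \<ge> 2 \<Longrightarrow> f (p ^ k) = 0"
    and Cpos: "C > 0"
    and bound: "\<And>n. n \<ge> 2 \<Longrightarrow> \<bar>f n\<bar> \<le> C * real n powr \<gamma>"
    and inv: "is_dirichlet_inverse f g"
  shows "\<forall>n\<ge>2. \<bar>g n\<bar> \<le> C ^ bigOmega n * real n powr \<gamma>"
proof (intro allI impI)
  fix n :: nat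
  assume "n \<ge> 2"
  let ?G = "prime_factor_prod (\<lambda>p. - f p)"
  have "g n = ?G n"
    using dirichlet_inverse_unique[OF _ inv is_dirichlet_inverse_prime_factor_prod[OF f1 mult sqfree]]
      f1 \<open>n \<ge> 2\<close> by simp
  also have "\<bar>?G n\<bar> \<le> C ^ bigOmega n * real n powr \<gamma>"
    using Cpos bound[OF prime_ge_2_nat] \<open>n \<ge> 2\<close> by (intro abs_prime_factor_prod_le) auto
  finally show "\<bar>g n\<bar> \<le> C ^ bigOmega n * real n powr \<gamma>" .
qed

end
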